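(* The push-based remote control problem described in the context is equivalent to the single-agent POMDP $\hat{\mathcal{M}}$ described in the context: (after the encoder's decision at time $0$) deterministic pairs of encoder and decoder policies correspond to deterministic policies of $\hat{\mathcal{M}}$ with equal expected discounted objective, so that the optimal push-based policies are obtained from the optimal policy of $\hat{\mathcal{M}}$, $\hat{\boldsymbol{\pi}}^*_{\text{joint}}=\arg\max_{\hat{\boldsymbol{\pi}}:\Omega\to\hat{\mathcal{A}}}\sum_{t=0}^\infty\gamma^t\,\mathbb{E}_{\boldsymbol{\omega}_0,\hat{\boldsymbol{\pi}}}\big[\hat r(s_t,\hat{\boldsymbol{\pi}}(\boldsymbol{\omega}_t))\big]$, by splitting each chosen action $\langle a,\mathbf{c}\rangle$ into the decoder's control action $a$ and the encoder's communication decisions $\mathbf{c}$.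
   Context: Push-based problem: finite state set $\mathcal{S}$, finite control action set $\mathcal{A}$, stochastic matrices $\mathbf{P}^a$ ($a\in\mathcal{A}$) with $P^a_{s,s'}$ the probability of moving from $s$ to $s'$ under $a$, reward $r(s,a,s')$, discount $\gamma\in[0,1)$, communication cost $\beta>0$. A Markov process evolves as $s_{t+1}\sim P^{a_t}_{s_t,\cdot}$. At each time $t$ an encoder, observing $s_t$ and the past decoder observations, chooses $c_t\in\{0,1\}$; the decoder observes $o_t=s_t$ if $c_t=1$ and $o_t=\chi$ otherwise, then chooses $a_t\in\mathcal{A}$ based on $o_{0:t}$ (and its past actions). The objective is to maximize $\mathbb{E}\big[\sum_t\gamma^t(r(s_t,a_t,s_{t+1})-\beta c_t)\big]$ over deterministic encoder and decoder policies; the encoder's decision at time $0$ is optimized separately. POMDP $\hat{\mathcal{M}}$: hidden state space $\mathcal{S}$; observation space $\mathcal{S}\cup\{\chi\}$; action space $\hat{\mathcal{A}}=\mathcal{A}\times\{0,1\}^{|\mathcal{S}|}$, where an action $\langle a,\mathbf{c}\rangle$ consists of a decoder control action $a$ and an encoder communication decision $\mathbf{c}_{s}\in\{0,1\}$ for every possible next state $s$; transition $\Pr(s_{t+1}=s'\mid s_t=s,\langle a,\mathbf{c}\rangle)=P^a_{s,s'}$; after moving to $s'$ the observation is $s'$ if $\mathbf{c}_{s'}=1$ and $\chi$ if $\mathbf{c}_{s'}=0$; reward $\hat r(s,\langle a,\mathbf{c}\rangle)=\sum_{s'\in\mathcal{S}}P^a_{s,s'}\big(r(s,a,s')-\gamma\beta\,\mathbf{c}_{s'}\big)$.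 $\Omega$ is the probability simplex over $\mathcal{S}$ (beliefs), $\boldsymbol{\omega}_t$ is the belief at time $t$ and $\boldsymbol{\omega}_0$ the decoder's initial belief. *)

theory Defs
  imports Complex_Main
begin

text \<open>
  A transition kernel is P :: 'a => 's => 's => real, with P a s s' the probability
  of moving from s to s' under a.  The decoder observation "chi" (no transmission)
  is None, a transmitted state s is Some s.  Histories are the decoder observations
  o_1, ..., o_t after time 0 (chronological list); the time-0 observation o_0 is
  already absorbed into the decoder's initial belief omega_0, the initial state
  s_0 being distributed according to omega_0.
\<close>

type_synonym 's obs_hist = "'s option list"

definition stochastic :: "('a \<Rightarrow> 's::finite \<Rightarrow> 's \<Rightarrow> real) \<Rightarrow> bool" where
  "stochastic P \<longleftrightarrow> (\<forall>a s. (\<forall>s'. 0 \<le> P a s s') \<and> (\<Sum>s'\<in>UNIV. P a s s') = 1)"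

definition belief_simplex :: "('s::finite \<Rightarrow> real) set" where
  "belief_simplex = {\<omega>. (\<forall>s. 0 \<le> \<omega> s) \<and> (\<Sum>s\<in>UNIV. \<omega> s) = 1}"

text \<open>Encoder: enc h s = c_t, where h = o_1..o_(t-1) are the past decoder observations and
  s = s_t the current state.  Decoder: dec h = a_t, where h = o_1..o_t.\<close>

definition obs_of :: "bool \<Rightarrow> 's \<Rightarrow> 's option" where
  "obs_of c s = (if c then Some s else None)"

text \<open>push_val_from P r beta enc dec t h s: expected reward r(s_k,a_k,s_(k+1)) - beta c_k
  at t steps after a time k0 >= 1 at which the process is in state s (not yet
  encoded), the past decoder observations being h.\<close>

fun push_val_from ::
  "('a \<Rightarrow> 's::finite \<Rightarrow> 's \<Rightarrow> real) \<Rightarrow> ('s \<Rightarrow> 'a \<Rightarrow> 's \<Rightarrow> real) \<Rightarrow> real \<Rightarrow>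
   ('s obs_hist \<Rightarrow> 's \<Rightarrow> bool) \<Rightarrow> ('s obs_hist \<Rightarrow> 'a) \<Rightarrow> nat \<Rightarrow> 's obs_hist \<Rightarrow> 's \<Rightarrow> real" where
  "push_val_from P r \<beta> enc dec 0 h s =
     (let c = enc h s; h' = h @ [obs_of c s]; a = dec h' in
        (\<Sum>s'\<in>UNIV. P a s s' * r s a s') - \<beta> * (if c then 1 else 0))"
| "push_val_from P r \<beta> enc dec (Suc t) h s =
     (let c = enc h s; h' = h @ [obs_of c s]; a = dec h' in
        (\<Sum>s'\<in>UNIV. P a s s' * push_val_from P r \<beta> enc dec t h' s'))"

text \<open>Expected reward at time t, starting at time 0 in state s (the time-0
  communication decision has already been made; its cost is not included).\<close>

fun push_val ::
  "('a \<Rightarrow> 's::finite \<Rightarrow> 's \<Rightarrow> real) \<Rightarrow> ('s \<Rightarrow> 'a \<Rightarrow> 's \<Rightarrow> real) \<Rightarrow> real \<Rightarrow>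
   ('s obs_hist \<Rightarrow> 's \<Rightarrow> bool) \<Rightarrow> ('s obs_hist \<Rightarrow> 'a) \<Rightarrow> nat \<Rightarrow> 's \<Rightarrow> real" where
  "push_val P r \<beta> enc dec 0 s = (\<Sum>s'\<in>UNIV. P (dec []) s s' * r s (dec []) s')"
| "push_val P r \<beta> enc dec (Suc t) s =
     (\<Sum>s'\<in>UNIV. P (dec []) s s' * push_val_from P r \<beta> enc dec t [] s')"

definition push_objective ::
  "('a \<Rightarrow> 's::finite \<Rightarrow> 's \<Rightarrow> real) \<Rightarrow> ('s \<Rightarrow> 'a \<Rightarrow> 's \<Rightarrow> real) \<Rightarrow> real \<Rightarrow> real \<Rightarrow>
   ('s \<Rightarrow> real) \<Rightarrow> ('s obs_hist \<Rightarrow> 's \<Rightarrow> bool) \<Rightarrow> ('s obs_hist \<Rightarrow> 'a) \<Rightarrow> real" where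
  "push_objective P r \<gamma> \<beta> \<omega>0 enc dec =
     (\<Sum>t. \<gamma> ^ t * (\<Sum>s\<in>UNIV. \<omega>0 s * push_val P r \<beta> enc dec t s))"

text \<open>An action of hat M is a pair (a, c) with c :: 's => bool the communication
  decision for every possible next state.\<close>

definition rhat ::
  "('a \<Rightarrow> 's::finite \<Rightarrow> 's \<Rightarrow> real) \<Rightarrow> ('s \<Rightarrow> 'a \<Rightarrow> 's \<Rightarrow> real) \<Rightarrow> real \<Rightarrow> real \<Rightarrow>
   's \<Rightarrow> 'a \<times> ('s \<Rightarrow> bool) \<Rightarrow> real" where
  "rhat P r \<gamma> \<beta> s ac =
     (\<Sum>s'\<in>UNIV. P (fst ac) s s' * (r s (fst ac) s' - \<gamma> * \<beta> * (if snd ac s' then 1 else 0)))"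

fun pomdp_val ::
  "('a \<Rightarrow> 's::finite \<Rightarrow> 's \<Rightarrow> real) \<Rightarrow> ('s \<Rightarrow> 'a \<Rightarrow> 's \<Rightarrow> real) \<Rightarrow> real \<Rightarrow> real \<Rightarrow>
   ('s obs_hist \<Rightarrow> 'a \<times> ('s \<Rightarrow> bool)) \<Rightarrow> nat \<Rightarrow> 's obs_hist \<Rightarrow> 's \<Rightarrow> real" where
  "pomdp_val P r \<gamma> \<beta> \<pi> 0 h s = rhat P r \<gamma> \<beta> s (\<pi> h)"
| "pomdp_val P r \<gamma> \<beta> \<pi> (Suc t) h s =
     (let (a, c) = \<pi> h in
        (\<Sum>s'\<in>UNIV. P a s s' * pomdp_val P r \<gamma> \<beta> \<pi> t (h @ [obs_of (c s') s']) s'))"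

definition pomdp_objective ::
  "('a \<Rightarrow> 's::finite \<Rightarrow> 's \<Rightarrow> real) \<Rightarrow> ('s \<Rightarrow> 'a \<Rightarrow> 's \<Rightarrow> real) \<Rightarrow> real \<Rightarrow> real \<Rightarrow>
   ('s \<Rightarrow> real) \<Rightarrow> ('s obs_hist \<Rightarrow> 'a \<times> ('s \<Rightarrow> bool)) \<Rightarrow> real" where
  "pomdp_objective P r \<gamma> \<beta> \<omega>0 \<pi> =
     (\<Sum>t. \<gamma> ^ t * (\<Sum>s\<in>UNIV. \<omega>0 s * pomdp_val P r \<gamma> \<beta> \<pi> t [] s))"

text \<open>Bayesian belief update after action (a,c) and observation ob.  (If the
  observation has probability zero the result is irrelevant.)\<close>

definition belief_update ::
  "('a \<Rightarrow> 's::finite \<Rightarrow> 's \<Rightarrow> real) \<Rightarrow> ('s \<Rightarrow> real) \<Rightarrow> 'a \<times> ('s \<Rightarrow> bool) \<Rightarrow> 's option \<Rightarrow> ('s \<Rightarrow> real)" where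
  "belief_update P \<omega> ac ob =
     (case ob of
        Some s' \<Rightarrow> (\<lambda>x. if x = s' then 1 else 0)
      | None \<Rightarrow>
          (let q = (\<lambda>s'. (\<Sum>s\<in>UNIV. \<omega> s * P (fst ac) s s') * (if snd ac s' then 0 else 1))
           in (\<lambda>s'. q s' / (\<Sum>x\<in>UNIV. q x))))"

definition belief_of ::
  "('a \<Rightarrow> 's::finite \<Rightarrow> 's \<Rightarrow> real) \<Rightarrow> ('s \<Rightarrow> real) \<Rightarrow> (('s \<Rightarrow> real) \<Rightarrow> 'a \<times> ('s \<Rightarrow> bool)) \<Rightarrow>
   's obs_hist \<Rightarrow> ('s \<Rightarrow> real)" where
  "belief_of P \<omega>0 \<pi>b h = foldl (\<lambda>\<omega> ob. belief_update P \<omega> (\<pi>b \<omega>) ob) \<omega>0 h"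

definition belief_policy ::
  "('a \<Rightarrow> 's::finite \<Rightarrow> 's \<Rightarrow> real) \<Rightarrow> ('s \<Rightarrow> real) \<Rightarrow> (('s \<Rightarrow> real) \<Rightarrow> 'a \<times> ('s \<Rightarrow> bool)) \<Rightarrow>
   ('s obs_hist \<Rightarrow> 'a \<times> ('s \<Rightarrow> bool))" where
  "belief_policy P \<omega>0 \<pi>b = (\<lambda>h. \<pi>b (belief_of P \<omega>0 \<pi>b h))"

definition join_policy ::
  "('s obs_hist \<Rightarrow> 's \<Rightarrow> bool) \<Rightarrow> ('s obs_hist \<Rightarrow> 'a) \<Rightarrow> ('s obs_hist \<Rightarrow> 'a \<times> ('s \<Rightarrow> bool))" where
  "join_policy enc dec = (\<lambda>h. (dec h, enc h))"

definition split_enc :: "('s obs_hist \<Rightarrow> 'a \<times> ('s \<Rightarrow> bool)) \<Rightarrow> ('s obs_hist \<Rightarrow> 's \<Rightarrow> bool)" where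
  "split_enc \<pi> = (\<lambda>h s. snd (\<pi> h) s)"

definition split_dec :: "('s obs_hist \<Rightarrow> 'a \<times> ('s \<Rightarrow> bool)) \<Rightarrow> ('s obs_hist \<Rightarrow> 'a)" where
  "split_dec \<pi> = (\<lambda>h. fst (\<pi> h))"

end

theory Submission
  imports Defs
begin

(* Under this identification the expected rewards agree step by step, except
   that transmitting s_(t+1) costs beta at time t + 1 in the push problem, but gamma * beta at
   time t in the POMDP, when the action deciding it is taken; the discounted sums coincide.

   For optimality, let V(mu) be the supremum of the POMDP objective over all history-dependent
   policies, for unnormalised beliefs mu, so that V(z mu) <= z V(mu).  One Bellman step splits the
   predicted law of the next state into the transmitted point masses and the silent remainder,
   whose normalisation is the Bayesian update after observing chi.  Hence, for the belief policy
   acting greedily with respect to V, the supremum S over the simplex of the defect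
   V(omega) - (objective of the greedy policy from omega) satisfies S <= gamma S, so S <= 0. *)

section \<open>Discounted sums\<close>

lemma summable_discounted:
  fixes \<gamma> :: real
  assumes "0 \<le> \<gamma>" "\<gamma> < 1" "\<And>t. \<bar>f t\<bar> \<le> C"
  shows "summable (\<lambda>t. \<gamma> ^ t * f t)"
proof (rule summable_comparison_test'[where g = "\<lambda>t. C * \<gamma> ^ t" and N = 0])
  show "summable (\<lambda>t. C * \<gamma> ^ t)"
    using assms by (intro summable_mult summable_geometric) auto
  show "norm (\<gamma> ^ t * f t) \<le> C * \<gamma> ^ t" for t
    using assms(1) assms(3)[of t] by (simp add: abs_mult mult.commute mult_right_mono)
qed

lemma abs_suminf_discounted_le:
  fixes \<gamma> :: real
  assumes "0 \<le> \<gamma>" "\<gamma> < 1" "\<And>t. \<bar>f t\<bar> \<le> C"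
  shows "\<bar>\<Sum>t. \<gamma> ^ t * f t\<bar> \<le> C / (1 - \<gamma>)"
proof -
  have le: "\<bar>\<gamma> ^ t * f t\<bar> \<le> C * \<gamma> ^ t" for t
    using assms(1) assms(3)[of t] by (simp add: abs_mult mult.commute mult_right_mono)
  have geo: "summable (\<lambda>t. C * \<gamma> ^ t)"
    using assms by (intro summable_mult summable_geometric) auto
  have abs: "summable (\<lambda>t. \<bar>\<gamma> ^ t * f t\<bar>)"
    by (rule summable_comparison_test'[OF geo, of 0]) (use le in auto)
  have "\<bar>\<Sum>t. \<gamma> ^ t * f t\<bar> \<le> (\<Sum>t. \<bar>\<gamma> ^ t * f t\<bar>)"
    by (rule summable_rabs[OF abs])
  also have "\<dots> \<le> (\<Sum>t. C * \<gamma> ^ t)"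
    by (rule suminf_le[OF le abs geo])
  also have "\<dots> = C / (1 - \<gamma>)"
    using assms by (simp add: suminf_mult suminf_geometric)
  finally show ?thesis .
qed

lemma suminf_discounted_split_head:
  fixes \<gamma> :: real
  assumes "0 \<le> \<gamma>" "\<gamma> < 1" "\<And>t. \<bar>f t\<bar> \<le> C"
  shows "(\<Sum>t. \<gamma> ^ t * f t) = f 0 + \<gamma> * (\<Sum>t. \<gamma> ^ t * f (Suc t))"
proof -
  have shifted: "summable (\<lambda>t. \<gamma> ^ t * f (Suc t))"
    using assms by (rule summable_discounted)
  have "(\<Sum>t. \<gamma> ^ t * f t) = f 0 + (\<Sum>t. \<gamma> ^ Suc t * f (Suc t))"
    using suminf_split_head[OF summable_discounted[of \<gamma> f C, OF assms]] by simp
  also have "(\<Sum>t. \<gamma> ^ Suc t * f (Suc t)) = \<gamma> * (\<Sum>t. \<gamma> ^ t * f (Suc t))"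
    using suminf_mult[OF shifted, of \<gamma>] by (simp add: mult.assoc)
  finally show ?thesis .
qed

lemma suminf_discounted_diff:
  fixes \<gamma> :: real
  assumes "0 \<le> \<gamma>" "\<gamma> < 1" "\<And>t. \<bar>f t\<bar> \<le> C" "\<And>t. \<bar>g t\<bar> \<le> C"
  shows "(\<Sum>t. \<gamma> ^ t * (f t - k * g t)) = (\<Sum>t. \<gamma> ^ t * f t) - k * (\<Sum>t. \<gamma> ^ t * g t)"
proof -
  have sf: "summable (\<lambda>t. \<gamma> ^ t * f t)" and sg: "summable (\<lambda>t. \<gamma> ^ t * g t)"
    using summable_discounted assms by blast+
  have "(\<Sum>t. \<gamma> ^ t * (f t - k * g t)) = (\<Sum>t. \<gamma> ^ t * f t - k * (\<gamma> ^ t * g t))"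
    by (simp add: algebra_simps)
  also have "\<dots> = (\<Sum>t. \<gamma> ^ t * f t) - (\<Sum>t. k * (\<gamma> ^ t * g t))"
    by (rule suminf_diff[OF sf summable_mult[OF sg], symmetric])
  finally show ?thesis
    by (simp add: suminf_mult[OF sg])
qed

lemma suminf_discounted_delay:
  fixes \<gamma> :: real
  assumes "0 \<le> \<gamma>" "\<gamma> < 1" "\<And>t. \<bar>f t\<bar> \<le> C"
  shows "(\<Sum>t. \<gamma> ^ t * (case t of 0 \<Rightarrow> 0 | Suc n \<Rightarrow> f n)) = \<gamma> * (\<Sum>t. \<gamma> ^ t * f t)"
proof -
  have "0 \<le> C"
    using assms(3)[of 0] by (meson abs_ge_zero order_trans)
  then have "\<bar>case t of 0 \<Rightarrow> 0 | Suc n \<Rightarrow> f n\<bar> \<le> C" for t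
    using assms(3) by (cases t) auto
  from suminf_discounted_split_head[OF assms(1,2) this] show ?thesis
    by simp
qed

lemma abs_weighted_sum_le:
  fixes \<mu> :: "'s::finite \<Rightarrow> real"
  assumes "\<And>s. \<bar>f s\<bar> \<le> C"
  shows "\<bar>\<Sum>s\<in>UNIV. \<mu> s * f s\<bar> \<le> (\<Sum>s\<in>UNIV. \<bar>\<mu> s\<bar>) * C"
proof -
  have "\<bar>\<Sum>s\<in>UNIV. \<mu> s * f s\<bar> \<le> (\<Sum>s\<in>UNIV. \<bar>\<mu> s\<bar> * C)"
    using assms by (intro order_trans[OF sum_abs] sum_mono) (simp add: abs_mult mult_left_mono)
  then show ?thesis
    by (simp add: sum_distrib_right)
qed

lemma abs_expectation_le:
  assumes "stochastic P" "\<And>s'. \<bar>f s'\<bar> \<le> C"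
  shows "\<bar>\<Sum>s'\<in>UNIV. P a s s' * f s'\<bar> \<le> C"
  using abs_weighted_sum_le[of f C "P a s", OF assms(2)] assms(1)
  by (simp add: stochastic_def)

lemma le_arg_max_finite:
  fixes f :: "'b::finite \<Rightarrow> 'c::linorder"
  shows "f y \<le> f (arg_max f (\<lambda>_. True))"
proof -
  have "Max (range f) \<in> range f"
    by (rule Max_in) simp_all
  then obtain k where k: "f k = Max (range f)"
    by (metis rangeE)
  have "f x \<le> f k" for x
    unfolding k by (rule Max_ge) simp_all
  then have "f (arg_max f (\<lambda>_. True)) = f k"
    by (intro arg_max_equality) auto
  with \<open>f y \<le> f k\<close> show ?thesis
    by simp
qed

section \<open>Equivalence of the push problem and the POMDP\<close>

fun policy_eval ::
  "('a \<Rightarrow> 's::finite \<Rightarrow> 's \<Rightarrow> real) \<Rightarrow> ('s obs_hist \<Rightarrow> 'a \<times> ('s \<Rightarrow> bool)) \<Rightarrow>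
   ('a \<times> ('s \<Rightarrow> bool) \<Rightarrow> 's \<Rightarrow> real) \<Rightarrow> nat \<Rightarrow> 's obs_hist \<Rightarrow> 's \<Rightarrow> real" where
  "policy_eval P \<pi> f 0 h s = f (\<pi> h) s"
| "policy_eval P \<pi> f (Suc t) h s =
     (\<Sum>s'\<in>UNIV. P (fst (\<pi> h)) s s' * policy_eval P \<pi> f t (h @ [obs_of (snd (\<pi> h) s') s']) s')"

lemma pomdp_val_eq_policy_eval:
  "pomdp_val P r \<gamma> \<beta> \<pi> t h s = policy_eval P \<pi> (\<lambda>ac s. rhat P r \<gamma> \<beta> s ac) t h s"
  by (induction t arbitrary: h s) (auto simp: split_def Let_def)

lemma policy_eval_diff:
  "policy_eval P \<pi> (\<lambda>ac s. f ac s - k * g ac s) t h s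
     = policy_eval P \<pi> f t h s - k * policy_eval P \<pi> g t h s"
  by (induction t arbitrary: h s)
     (simp_all add: right_diff_distrib sum_subtractf sum_distrib_left mult.left_commute)

lemma abs_policy_eval_le:
  assumes "stochastic P" "\<And>ac s. \<bar>f ac s\<bar> \<le> C"
  shows "\<bar>policy_eval P \<pi> f t h s\<bar> \<le> C"
  using assms by (induction t arbitrary: h s) (auto intro!: abs_expectation_le)

definition control_reward ::
  "('a \<Rightarrow> 's::finite \<Rightarrow> 's \<Rightarrow> real) \<Rightarrow> ('s \<Rightarrow> 'a \<Rightarrow> 's \<Rightarrow> real) \<Rightarrow> 'a \<times> ('s \<Rightarrow> bool) \<Rightarrow> 's \<Rightarrow> real" where
  "control_reward P r ac s = (\<Sum>s'\<in>UNIV. P (fst ac) s s' * r s (fst ac) s')"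

definition transmission_prob ::
  "('a \<Rightarrow> 's::finite \<Rightarrow> 's \<Rightarrow> real) \<Rightarrow> 'a \<times> ('s \<Rightarrow> bool) \<Rightarrow> 's \<Rightarrow> real" where
  "transmission_prob P ac s = (\<Sum>s'\<in>UNIV. P (fst ac) s s' * (if snd ac s' then 1 else 0))"

lemma rhat_eq_control_reward_minus_cost:
  "rhat P r \<gamma> \<beta> s ac = control_reward P r ac s - \<gamma> * \<beta> * transmission_prob P ac s"
  unfolding rhat_def control_reward_def transmission_prob_def
  by (simp add: sum_subtractf sum_distrib_left algebra_simps)

lemma join_policy_components [simp]:
  "fst (join_policy enc dec h) = dec h" "snd (join_policy enc dec h) = enc h"
  by (simp_all add: join_policy_def)

fun push_transmissions_from ::
  "('a \<Rightarrow> 's::finite \<Rightarrow> 's \<Rightarrow> real) \<Rightarrow> ('s obs_hist \<Rightarrow> 's \<Rightarrow> bool) \<Rightarrow> ('s obs_hist \<Rightarrow> 'a) \<Rightarrow>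
   nat \<Rightarrow> 's obs_hist \<Rightarrow> 's \<Rightarrow> real" where
  "push_transmissions_from P enc dec 0 h s = (if enc h s then 1 else 0)"
| "push_transmissions_from P enc dec (Suc t) h s =
     (let h' = h @ [obs_of (enc h s) s] in
        (\<Sum>s'\<in>UNIV. P (dec h') s s' * push_transmissions_from P enc dec t h' s'))"

lemma push_val_from_eq:
  "push_val_from P r \<beta> enc dec t h s
     = policy_eval P (join_policy enc dec) (control_reward P r) t (h @ [obs_of (enc h s) s]) s
       - \<beta> * push_transmissions_from P enc dec t h s"
  by (induction t arbitrary: h s)
     (simp_all add: Let_def control_reward_def right_diff_distrib
       sum_subtractf sum_distrib_left mult.left_commute)

lemma policy_eval_join_transmission_prob:
  "policy_eval P (join_policy enc dec) (transmission_prob P) t h s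
     = (\<Sum>s'\<in>UNIV. P (dec h) s s' * push_transmissions_from P enc dec t h s')"
  by (induction t arbitrary: h s) (auto simp: transmission_prob_def Let_def)

lemma push_val_eq:
  "push_val P r \<beta> enc dec t s
     = policy_eval P (join_policy enc dec) (control_reward P r) t [] s
       - \<beta> * (case t of 0 \<Rightarrow> 0
               | Suc n \<Rightarrow> policy_eval P (join_policy enc dec) (transmission_prob P) n [] s)"
  by (cases t)
     (simp_all add: push_val_from_eq policy_eval_join_transmission_prob control_reward_def
       right_diff_distrib sum_subtractf sum_distrib_left mult.left_commute)

lemma join_split_policy: "join_policy (split_enc \<pi>) (split_dec \<pi>) = \<pi>"
  by (simp add: join_policy_def split_enc_def split_dec_def)

locale discounted_push_problem =
  fixes P :: "'a::finite \<Rightarrow> 's::finite \<Rightarrow> 's \<Rightarrow> real"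
    and r :: "'s \<Rightarrow> 'a \<Rightarrow> 's \<Rightarrow> real"
    and \<gamma> \<beta> :: real
  assumes stochastic: "stochastic P"
    and discount_nonneg: "0 \<le> \<gamma>"
    and discount_less_one: "\<gamma> < 1"
begin

definition reward_bound :: real where
  "reward_bound = Max (range (\<lambda>(s, a, s'). \<bar>r s a s'\<bar>))"

lemma abs_reward_le: "\<bar>r s a s'\<bar> \<le> reward_bound"
  unfolding reward_bound_def by (rule Max_ge) (auto intro!: image_eqI[of _ _ "(s, a, s')"])

lemma abs_control_reward_le: "\<bar>control_reward P r ac s\<bar> \<le> reward_bound"
  unfolding control_reward_def by (rule abs_expectation_le[OF stochastic abs_reward_le])

lemma abs_transmission_prob_le: "\<bar>transmission_prob P ac s\<bar> \<le> 1"
  unfolding transmission_prob_def by (rule abs_expectation_le[OF stochastic]) simp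

lemma abs_rhat_le: "\<bar>rhat P r \<gamma> \<beta> s ac\<bar> \<le> reward_bound + \<bar>\<gamma> * \<beta>\<bar>"
proof -
  have "\<bar>\<gamma> * \<beta> * transmission_prob P ac s\<bar> \<le> \<bar>\<gamma> * \<beta>\<bar>"
    using abs_transmission_prob_le[of ac s] by (simp add: abs_mult mult_left_le)
  with abs_control_reward_le[of ac s] show ?thesis
    unfolding rhat_eq_control_reward_minus_cost by (meson abs_triangle_ineq4 add_mono order_trans)
qed

lemma abs_pomdp_val_le: "\<bar>pomdp_val P r \<gamma> \<beta> \<pi> t h s\<bar> \<le> reward_bound + \<bar>\<gamma> * \<beta>\<bar>"
  unfolding pomdp_val_eq_policy_eval by (rule abs_policy_eval_le[OF stochastic abs_rhat_le])

lemma pomdp_objective_join_policy: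
  "pomdp_objective P r \<gamma> \<beta> \<mu> (join_policy enc dec) = push_objective P r \<gamma> \<beta> \<mu> enc dec"
proof -
  let ?\<pi> = "join_policy enc dec"
  define A where "A t = (\<Sum>s\<in>UNIV. \<mu> s * policy_eval P ?\<pi> (control_reward P r) t [] s)" for t
  define B where "B t = (\<Sum>s\<in>UNIV. \<mu> s * policy_eval P ?\<pi> (transmission_prob P) t [] s)" for t
  define C where "C = (\<Sum>s\<in>UNIV. \<bar>\<mu> s\<bar>) * max reward_bound 1"
  have A_le: "\<bar>A t\<bar> \<le> C" for t
    unfolding A_def C_def using abs_control_reward_le
    by (intro abs_weighted_sum_le abs_policy_eval_le[OF stochastic]) (meson max.cobounded1 order_trans)
  have B_le: "\<bar>B t\<bar> \<le> C" for t
    unfolding B_def C_def using abs_transmission_prob_le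
    by (intro abs_weighted_sum_le abs_policy_eval_le[OF stochastic]) (meson max.cobounded2 order_trans)
  have "pomdp_objective P r \<gamma> \<beta> \<mu> ?\<pi> = (\<Sum>t. \<gamma> ^ t * (A t - \<gamma> * \<beta> * B t))"
    unfolding pomdp_objective_def A_def B_def pomdp_val_eq_policy_eval
      rhat_eq_control_reward_minus_cost policy_eval_diff
    by (simp add: right_diff_distrib sum_subtractf sum_distrib_left mult.left_commute)
  also have "\<dots> = (\<Sum>t. \<gamma> ^ t * A t) - \<beta> * (\<gamma> * (\<Sum>t. \<gamma> ^ t * B t))"
    using suminf_discounted_diff[OF discount_nonneg discount_less_one A_le B_le] by simp
  also have "\<dots> = (\<Sum>t. \<gamma> ^ t * A t) - \<beta> * (\<Sum>t. \<gamma> ^ t * (case t of 0 \<Rightarrow> 0 | Suc n \<Rightarrow> B n))"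
    using suminf_discounted_delay[OF discount_nonneg discount_less_one B_le] by simp
  also have "\<dots> = (\<Sum>t. \<gamma> ^ t * (A t - \<beta> * (case t of 0 \<Rightarrow> 0 | Suc n \<Rightarrow> B n)))"
  proof -
    have "\<bar>case t of 0 \<Rightarrow> 0 | Suc n \<Rightarrow> B n\<bar> \<le> C" for t
      using B_le[of 0] B_le by (cases t) (auto intro: order_trans[OF abs_ge_zero])
    from suminf_discounted_diff[OF discount_nonneg discount_less_one A_le this] show ?thesis
      by simp
  qed
  also have "\<dots> = push_objective P r \<gamma> \<beta> \<mu> enc dec"
    unfolding push_objective_def push_val_eq A_def B_def
    by (intro arg_cong[where f = suminf] ext) (auto simp: right_diff_distrib sum_subtractf
        sum_distrib_left mult.left_commute split: nat.split)
  finally show ?thesis .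
qed

section \<open>Optimality of the greedy belief policy\<close>

abbreviation obj :: "('s obs_hist \<Rightarrow> 'a \<times> ('s \<Rightarrow> bool)) \<Rightarrow> ('s \<Rightarrow> real) \<Rightarrow> real" where
  "obj \<pi> \<mu> \<equiv> pomdp_objective P r \<gamma> \<beta> \<mu> \<pi>"

definition shift_policy ::
  "('s obs_hist \<Rightarrow> 'a \<times> ('s \<Rightarrow> bool)) \<Rightarrow> 's option \<Rightarrow> 's obs_hist \<Rightarrow> 'a \<times> ('s \<Rightarrow> bool)" where
  "shift_policy \<pi> ob = (\<lambda>h. \<pi> (ob # h))"

definition point_belief :: "'s \<Rightarrow> 's \<Rightarrow> real" where
  "point_belief s' = (\<lambda>s. if s = s' then 1 else 0)"

definition predicted :: "'a \<Rightarrow> ('s \<Rightarrow> real) \<Rightarrow> 's \<Rightarrow> real" where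
  "predicted a \<mu> s' = (\<Sum>s\<in>UNIV. \<mu> s * P a s s')"

definition sent_part :: "'a \<Rightarrow> ('s \<Rightarrow> bool) \<Rightarrow> ('s \<Rightarrow> real) \<Rightarrow> 's \<Rightarrow> real" where
  "sent_part a c \<mu> s' = (if c s' then predicted a \<mu> s' else 0)"

definition silent_part :: "'a \<Rightarrow> ('s \<Rightarrow> bool) \<Rightarrow> ('s \<Rightarrow> real) \<Rightarrow> 's \<Rightarrow> real" where
  "silent_part a c \<mu> s' = (if c s' then 0 else predicted a \<mu> s')"

definition expected_rhat :: "('s \<Rightarrow> real) \<Rightarrow> 'a \<times> ('s \<Rightarrow> bool) \<Rightarrow> real" where
  "expected_rhat \<mu> ac = (\<Sum>s\<in>UNIV. \<mu> s * rhat P r \<gamma> \<beta> s ac)"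

lemma pomdp_val_Cons:
  "pomdp_val P r \<gamma> \<beta> \<pi> t (ob # h) s = pomdp_val P r \<gamma> \<beta> (shift_policy \<pi> ob) t h s"
  by (induction t arbitrary: h s) (auto simp: shift_policy_def split_def Let_def)

lemma summable_pomdp_val:
  "summable (\<lambda>t. \<gamma> ^ t * (\<Sum>s\<in>UNIV. \<mu> s * pomdp_val P r \<gamma> \<beta> \<pi> t h s))"
  by (rule summable_discounted[OF discount_nonneg discount_less_one abs_weighted_sum_le])
     (rule abs_pomdp_val_le)

lemma abs_pomdp_objective_le:
  "\<bar>obj \<pi> \<mu>\<bar> \<le> (\<Sum>s\<in>UNIV. \<bar>\<mu> s\<bar>) * (reward_bound + \<bar>\<gamma> * \<beta>\<bar>) / (1 - \<gamma>)"
  unfolding pomdp_objective_def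
  by (rule abs_suminf_discounted_le[OF discount_nonneg discount_less_one abs_weighted_sum_le])
     (rule abs_pomdp_val_le)

lemma pomdp_objective_scale: "obj \<pi> (\<lambda>s. z * \<mu> s) = z * obj \<pi> \<mu>"
proof -
  have "obj \<pi> (\<lambda>s. z * \<mu> s)
      = (\<Sum>t. z * (\<gamma> ^ t * (\<Sum>s\<in>UNIV. \<mu> s * pomdp_val P r \<gamma> \<beta> \<pi> t [] s)))"
    unfolding pomdp_objective_def by (simp add: sum_distrib_left mult.assoc mult.left_commute)
  then show ?thesis
    unfolding pomdp_objective_def by (simp add: suminf_mult[OF summable_pomdp_val])
qed

lemma expected_pomdp_val_Suc:
  assumes "\<pi> [] = (a, c)"
  shows "(\<Sum>s\<in>UNIV. \<mu> s * pomdp_val P r \<gamma> \<beta> \<pi> (Suc t) [] s)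
    = (\<Sum>s'\<in>UNIV. \<Sum>x\<in>UNIV. sent_part a c \<mu> s' * point_belief s' x
                       * pomdp_val P r \<gamma> \<beta> (shift_policy \<pi> (Some s')) t [] x)
      + (\<Sum>x\<in>UNIV. silent_part a c \<mu> x * pomdp_val P r \<gamma> \<beta> (shift_policy \<pi> None) t [] x)"
proof -
  have point: "(\<Sum>x\<in>UNIV. z * point_belief s' x * f x) = z * f s'" for z s' and f :: "'s \<Rightarrow> real"
  proof -
    have "(\<Sum>x\<in>UNIV. z * point_belief s' x * f x) = (\<Sum>x\<in>UNIV. if x = s' then z * f s' else 0)"
      by (rule sum.cong) (auto simp: point_belief_def)
    then show ?thesis
      by simp
  qed
  have "(\<Sum>s\<in>UNIV. \<mu> s * pomdp_val P r \<gamma> \<beta> \<pi> (Suc t) [] s)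
      = (\<Sum>s\<in>UNIV. \<Sum>s'\<in>UNIV. \<mu> s * P a s s'
           * pomdp_val P r \<gamma> \<beta> (shift_policy \<pi> (obs_of (c s') s')) t [] s')"
    using assms by (simp add: pomdp_val_Cons sum_distrib_left mult.assoc)
  also have "\<dots> = (\<Sum>s'\<in>UNIV. predicted a \<mu> s'
           * pomdp_val P r \<gamma> \<beta> (shift_policy \<pi> (obs_of (c s') s')) t [] s')"
    by (subst sum.swap) (simp add: predicted_def sum_distrib_right)
  also have "\<dots> = (\<Sum>s'\<in>UNIV. sent_part a c \<mu> s' * pomdp_val P r \<gamma> \<beta> (shift_policy \<pi> (Some s')) t [] s'
           + silent_part a c \<mu> s' * pomdp_val P r \<gamma> \<beta> (shift_policy \<pi> None) t [] s')"
    by (rule sum.cong) (auto simp: sent_part_def silent_part_def obs_of_def)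
  finally show ?thesis
    by (simp add: sum.distrib point)
qed

lemma pomdp_objective_unfold:
  assumes "\<pi> [] = (a, c)"
  shows "obj \<pi> \<mu> = expected_rhat \<mu> (a, c)
    + \<gamma> * ((\<Sum>s'\<in>UNIV. obj (shift_policy \<pi> (Some s')) (\<lambda>x. sent_part a c \<mu> s' * point_belief s' x))
           + obj (shift_policy \<pi> None) (silent_part a c \<mu>))"
proof -
  define F where "F t = (\<Sum>s\<in>UNIV. \<mu> s * pomdp_val P r \<gamma> \<beta> \<pi> t [] s)" for t
  define G where "G s' t = (\<Sum>x\<in>UNIV. sent_part a c \<mu> s' * point_belief s' x
                       * pomdp_val P r \<gamma> \<beta> (shift_policy \<pi> (Some s')) t [] x)" for s' t
  define H where "H t = (\<Sum>x\<in>UNIV. silent_part a c \<mu> x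
                       * pomdp_val P r \<gamma> \<beta> (shift_policy \<pi> None) t [] x)" for t
  have G_summable: "summable (\<lambda>t. \<gamma> ^ t * G s' t)" for s'
    unfolding G_def by (rule summable_pomdp_val)
  have H_summable: "summable (\<lambda>t. \<gamma> ^ t * H t)"
    unfolding H_def by (rule summable_pomdp_val)
  have "obj \<pi> \<mu> = F 0 + \<gamma> * (\<Sum>t. \<gamma> ^ t * F (Suc t))"
    unfolding pomdp_objective_def F_def
    by (rule suminf_discounted_split_head[OF discount_nonneg discount_less_one
          abs_weighted_sum_le[OF abs_pomdp_val_le]])
  also have "(\<Sum>t. \<gamma> ^ t * F (Suc t)) = (\<Sum>t. (\<Sum>s'\<in>UNIV. \<gamma> ^ t * G s' t) + \<gamma> ^ t * H t)"
    unfolding F_def G_def H_def expected_pomdp_val_Suc[of \<pi> a c, OF assms]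
    by (simp add: distrib_left sum_distrib_left)
  also have "\<dots> = (\<Sum>t. \<Sum>s'\<in>UNIV. \<gamma> ^ t * G s' t) + (\<Sum>t. \<gamma> ^ t * H t)"
    by (rule suminf_add[symmetric]) (auto intro: summable_sum G_summable H_summable)
  also have "(\<Sum>t. \<Sum>s'\<in>UNIV. \<gamma> ^ t * G s' t) = (\<Sum>s'\<in>UNIV. \<Sum>t. \<gamma> ^ t * G s' t)"
    by (rule suminf_sum) (rule G_summable)
  finally show ?thesis
    using assms by (simp add: F_def G_def H_def pomdp_objective_def expected_rhat_def)
qed

definition opt_value :: "('s \<Rightarrow> real) \<Rightarrow> real" where
  "opt_value \<mu> = (SUP \<pi>. obj \<pi> \<mu>)"

lemma bdd_above_pomdp_objective: "bdd_above (range (\<lambda>\<pi>. obj \<pi> \<mu>))"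
  by (rule bdd_aboveI2) (rule abs_le_D1[OF abs_pomdp_objective_le])

lemma pomdp_objective_le_opt_value: "obj \<pi> \<mu> \<le> opt_value \<mu>"
  unfolding opt_value_def by (rule cSUP_upper[OF UNIV_I bdd_above_pomdp_objective])

lemma opt_value_le:
  "opt_value \<mu> \<le> (\<Sum>s\<in>UNIV. \<bar>\<mu> s\<bar>) * (reward_bound + \<bar>\<gamma> * \<beta>\<bar>) / (1 - \<gamma>)"
  unfolding opt_value_def by (rule cSUP_least) (simp, rule abs_le_D1[OF abs_pomdp_objective_le])

lemma opt_value_scale_le:
  assumes "0 \<le> z"
  shows "opt_value (\<lambda>s. z * \<mu> s) \<le> z * opt_value \<mu>"
  unfolding opt_value_def[of "\<lambda>s. z * \<mu> s"] pomdp_objective_scale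
  by (rule cSUP_least) (simp_all add: assms mult_left_mono pomdp_objective_le_opt_value)

definition q_value :: "('s \<Rightarrow> real) \<Rightarrow> 'a \<times> ('s \<Rightarrow> bool) \<Rightarrow> real" where
  "q_value \<mu> ac = expected_rhat \<mu> ac
     + \<gamma> * ((\<Sum>s'\<in>UNIV. opt_value (\<lambda>x. sent_part (fst ac) (snd ac) \<mu> s' * point_belief s' x))
            + opt_value (silent_part (fst ac) (snd ac) \<mu>))"

definition greedy :: "('s \<Rightarrow> real) \<Rightarrow> 'a \<times> ('s \<Rightarrow> bool)" where
  "greedy \<mu> = arg_max (q_value \<mu>) (\<lambda>_. True)"

lemma opt_value_le_q_value_greedy: "opt_value \<mu> \<le> q_value \<mu> (greedy \<mu>)"
  unfolding opt_value_def
proof (rule cSUP_least)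
  fix \<pi> :: "'s obs_hist \<Rightarrow> 'a \<times> ('s \<Rightarrow> bool)"
  obtain a c where ac: "\<pi> [] = (a, c)"
    by fastforce
  have "obj \<pi> \<mu> \<le> q_value \<mu> (a, c)"
    unfolding pomdp_objective_unfold[of \<pi> a c, OF ac] q_value_def fst_conv snd_conv
    by (intro add_left_mono mult_left_mono[OF _ discount_nonneg] add_mono sum_mono
        pomdp_objective_le_opt_value)
  also have "\<dots> \<le> q_value \<mu> (greedy \<mu>)"
    unfolding greedy_def by (rule le_arg_max_finite)
  finally show "obj \<pi> \<mu> \<le> q_value \<mu> (greedy \<mu>)" .
qed simp

abbreviation greedy_policy :: "('s \<Rightarrow> real) \<Rightarrow> 's obs_hist \<Rightarrow> 'a \<times> ('s \<Rightarrow> bool)" where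
  "greedy_policy \<omega> \<equiv> belief_policy P \<omega> greedy"

lemma greedy_policy_Nil: "greedy_policy \<omega> [] = greedy \<omega>"
  by (simp add: belief_policy_def belief_of_def)

lemma shift_greedy_policy:
  "shift_policy (greedy_policy \<omega>) ob = greedy_policy (belief_update P \<omega> (greedy \<omega>) ob)"
  by (simp add: shift_policy_def belief_policy_def belief_of_def)

lemma belief_update_Some: "belief_update P \<mu> ac (Some s') = point_belief s'"
  by (simp add: belief_update_def point_belief_def)

lemma belief_update_None:
  "belief_update P \<mu> (a, c) None = (\<lambda>s'. silent_part a c \<mu> s' / (\<Sum>x\<in>UNIV. silent_part a c \<mu> x))"
proof -
  have "(\<lambda>s'. (\<Sum>s\<in>UNIV. \<mu> s * P a s s') * (if c s' then 0 else 1)) = silent_part a c \<mu>"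
    by (auto simp: silent_part_def predicted_def)
  then show ?thesis
    by (simp add: belief_update_def Let_def)
qed

lemma point_belief_in_simplex: "point_belief s \<in> belief_simplex"
  by (simp add: belief_simplex_def point_belief_def)

lemma predicted_nonneg:
  assumes "\<mu> \<in> belief_simplex"
  shows "0 \<le> predicted a \<mu> s'"
  using assms stochastic
  unfolding predicted_def belief_simplex_def stochastic_def by (auto intro: sum_nonneg)

lemma sum_sent_part_silent_part:
  assumes "\<mu> \<in> belief_simplex"
  shows "(\<Sum>s'\<in>UNIV. sent_part a c \<mu> s') + (\<Sum>s'\<in>UNIV. silent_part a c \<mu> s') = 1"
proof -
  have "(\<Sum>s'\<in>UNIV. sent_part a c \<mu> s') + (\<Sum>s'\<in>UNIV. silent_part a c \<mu> s')
      = (\<Sum>s'\<in>UNIV. predicted a \<mu> s')"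
    unfolding sum.distrib[symmetric] by (rule sum.cong) (auto simp: sent_part_def silent_part_def)
  also have "\<dots> = 1"
    using assms stochastic unfolding predicted_def belief_simplex_def stochastic_def
    by (subst sum.swap) (simp add: sum_distrib_left[symmetric])
  finally show ?thesis .
qed

(* Also valid when the silent mass is 0, where the update is the junk value 0 / 0 = 0. *)
lemma silent_part_eq_scaled_update:
  assumes "\<mu> \<in> belief_simplex"
  shows "silent_part a c \<mu>
    = (\<lambda>s'. (\<Sum>x\<in>UNIV. silent_part a c \<mu> x) * belief_update P \<mu> (a, c) None s')"
proof
  fix s'
  have nonneg: "0 \<le> silent_part a c \<mu> x" for x
    using predicted_nonneg[OF assms] by (simp add: silent_part_def)
  show "silent_part a c \<mu> s' = (\<Sum>x\<in>UNIV. silent_part a c \<mu> x) * belief_update P \<mu> (a, c) None s'"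
  proof (cases "(\<Sum>x\<in>UNIV. silent_part a c \<mu> x) = 0")
    case True
    then show ?thesis
      using sum_nonneg_eq_0_iff[of UNIV "silent_part a c \<mu>"] nonneg by simp
  qed (simp add: belief_update_None)
qed

lemma belief_update_None_in_simplex:
  assumes "\<mu> \<in> belief_simplex" "0 < (\<Sum>x\<in>UNIV. silent_part a c \<mu> x)"
  shows "belief_update P \<mu> (a, c) None \<in> belief_simplex"
  using assms predicted_nonneg[OF assms(1)]
  by (simp add: belief_simplex_def belief_update_None silent_part_def sum_divide_distrib[symmetric])

definition defect :: "('s \<Rightarrow> real) \<Rightarrow> real" where
  "defect \<omega> = opt_value \<omega> - obj (greedy_policy \<omega>) \<omega>"

definition sup_defect :: real where
  "sup_defect = (SUP \<omega>\<in>belief_simplex. defect \<omega>)"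

lemma defect_le_sup_defect:
  assumes "\<omega> \<in> belief_simplex"
  shows "defect \<omega> \<le> sup_defect"
proof -
  define B where "B = (reward_bound + \<bar>\<gamma> * \<beta>\<bar>) / (1 - \<gamma>)"
  have "defect \<omega> \<le> B + B" if "\<omega> \<in> belief_simplex" for \<omega>
  proof -
    have "(\<Sum>s\<in>UNIV. \<bar>\<omega> s\<bar>) = 1"
      using that by (simp add: belief_simplex_def)
    then have "opt_value \<omega> \<le> B" and "- obj (greedy_policy \<omega>) \<omega> \<le> B"
      using opt_value_le[of \<omega>]
        abs_le_D2[OF abs_pomdp_objective_le[where \<pi> = "greedy_policy \<omega>" and \<mu> = \<omega>]]
      by (simp_all add: B_def)
    then show ?thesis
      by (simp add: defect_def)
  qed
  then have "bdd_above (defect ` belief_simplex)"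
    by (rule bdd_aboveI2)
  with assms show ?thesis
    unfolding sup_defect_def by (rule cSUP_upper)
qed

lemma scaled_defect_le:
  assumes "0 \<le> z" and "0 < z \<Longrightarrow> \<omega> \<in> belief_simplex"
  shows "opt_value (\<lambda>s. z * \<omega> s) - obj (greedy_policy \<omega>) (\<lambda>s. z * \<omega> s) \<le> z * sup_defect"
proof -
  have "opt_value (\<lambda>s. z * \<omega> s) - obj (greedy_policy \<omega>) (\<lambda>s. z * \<omega> s) \<le> z * defect \<omega>"
    using opt_value_scale_le[OF assms(1)]
    by (simp add: pomdp_objective_scale defect_def right_diff_distrib)
  also have "\<dots> \<le> z * sup_defect"
    using assms defect_le_sup_defect by (cases "z = 0") (auto intro: mult_left_mono)
  finally show ?thesis .
qed

lemma q_value_greedy_minus_objective: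
  assumes "greedy \<omega> = (a, c)"
  shows "q_value \<omega> (a, c) - obj (greedy_policy \<omega>) \<omega>
    = \<gamma> * ((\<Sum>s'\<in>UNIV. opt_value (\<lambda>x. sent_part a c \<omega> s' * point_belief s' x)
                - obj (greedy_policy (point_belief s')) (\<lambda>x. sent_part a c \<omega> s' * point_belief s' x))
           + (opt_value (silent_part a c \<omega>)
                - obj (greedy_policy (belief_update P \<omega> (a, c) None)) (silent_part a c \<omega>)))"
  using pomdp_objective_unfold[of "greedy_policy \<omega>" a c \<omega>]
  by (simp add: assms greedy_policy_Nil shift_greedy_policy belief_update_Some q_value_def
      sum_subtractf right_diff_distrib distrib_left)

lemma defect_le_discounted_sup_defect:
  assumes \<omega>: "\<omega> \<in> belief_simplex"
  shows "defect \<omega> \<le> \<gamma> * sup_defect"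
proof -
  obtain a c where ac: "greedy \<omega> = (a, c)"
    by fastforce
  define sent where "sent s' = sent_part a c \<omega> s'" for s'
  define z where "z = (\<Sum>x\<in>UNIV. silent_part a c \<omega> x)"
  define \<omega>' where "\<omega>' = belief_update P \<omega> (a, c) None"
  have silent: "silent_part a c \<omega> = (\<lambda>s. z * \<omega>' s)"
    unfolding z_def \<omega>'_def by (rule silent_part_eq_scaled_update[OF \<omega>])
  have "defect \<omega> \<le> q_value \<omega> (a, c) - obj (greedy_policy \<omega>) \<omega>"
    using opt_value_le_q_value_greedy[of \<omega>] by (simp add: defect_def ac)
  also have "\<dots> = \<gamma> * ((\<Sum>s'\<in>UNIV. opt_value (\<lambda>x. sent s' * point_belief s' x)
          - obj (greedy_policy (point_belief s')) (\<lambda>x. sent s' * point_belief s' x))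
        + (opt_value (\<lambda>s. z * \<omega>' s) - obj (greedy_policy \<omega>') (\<lambda>s. z * \<omega>' s)))"
    unfolding q_value_greedy_minus_objective[OF ac] sent_def silent \<omega>'_def ..
  also have "\<dots> \<le> \<gamma> * ((\<Sum>s'\<in>UNIV. sent s' * sup_defect) + z * sup_defect)"
  proof -
    have "0 \<le> sent s'" for s'
      using predicted_nonneg[OF \<omega>] by (simp add: sent_def sent_part_def)
    moreover have "0 \<le> z"
      using predicted_nonneg[OF \<omega>] by (simp add: z_def silent_part_def sum_nonneg)
    moreover have "0 < z \<Longrightarrow> \<omega>' \<in> belief_simplex"
      unfolding z_def \<omega>'_def by (rule belief_update_None_in_simplex[OF \<omega>])
    ultimately show ?thesis
      by (intro mult_left_mono[OF _ discount_nonneg] add_mono sum_mono scaled_defect_le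
          point_belief_in_simplex)
  qed
  also have "\<dots> = \<gamma> * sup_defect"
    using sum_sent_part_silent_part[OF \<omega>, of a c]
    by (simp add: sent_def z_def flip: sum_distrib_right distrib_right)
  finally show ?thesis .
qed

lemma sup_defect_nonpos: "sup_defect \<le> 0"
proof -
  have "(SUP \<omega>\<in>belief_simplex. defect \<omega>) \<le> \<gamma> * sup_defect"
    by (rule cSUP_least) (use point_belief_in_simplex defect_le_discounted_sup_defect in auto)
  then have "(1 - \<gamma>) * sup_defect \<le> 0"
    by (simp add: sup_defect_def[symmetric] algebra_simps)
  with discount_less_one show ?thesis
    by (simp add: mult_le_0_iff)
qed

lemma greedy_policy_optimal:
  assumes "\<omega> \<in> belief_simplex"
  shows "obj \<pi> \<omega> \<le> obj (greedy_policy \<omega>) \<omega>"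
  using pomdp_objective_le_opt_value[where \<pi> = \<pi> and \<mu> = \<omega>] defect_le_sup_defect[OF assms]
    sup_defect_nonpos
  by (simp add: defect_def)

end

theorem theorem3:
  fixes P :: "'a::finite \<Rightarrow> 's::finite \<Rightarrow> 's \<Rightarrow> real"
    and r :: "'s \<Rightarrow> 'a \<Rightarrow> 's \<Rightarrow> real"
    and \<gamma> \<beta> :: real
    and \<omega>0 :: "'s \<Rightarrow> real"
  assumes "stochastic P"
    and "0 \<le> \<gamma>" and "\<gamma> < 1"
    and "0 < \<beta>"
    and "\<omega>0 \<in> belief_simplex"
  shows "(\<forall>enc dec. pomdp_objective P r \<gamma> \<beta> \<omega>0 (join_policy enc dec)
                      = push_objective P r \<gamma> \<beta> \<omega>0 enc dec)
       \<and> (\<forall>\<pi>. push_objective P r \<gamma> \<beta> \<omega>0 (split_enc \<pi>) (split_dec \<pi>)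
                      = pomdp_objective P r \<gamma> \<beta> \<omega>0 \<pi>)
       \<and> (\<forall>\<pi>s. (\<forall>\<pi>b. pomdp_objective P r \<gamma> \<beta> \<omega>0 (belief_policy P \<omega>0 \<pi>b)
                        \<le> pomdp_objective P r \<gamma> \<beta> \<omega>0 (belief_policy P \<omega>0 \<pi>s))
              \<longrightarrow> (\<forall>enc dec. push_objective P r \<gamma> \<beta> \<omega>0 enc dec
                        \<le> push_objective P r \<gamma> \<beta> \<omega>0
                             (split_enc (belief_policy P \<omega>0 \<pi>s)) (split_dec (belief_policy P \<omega>0 \<pi>s))))"
proof -
  interpret discounted_push_problem P r \<gamma> \<beta>
    using assms by unfold_locales
  have split: "push_objective P r \<gamma> \<beta> \<omega>0 (split_enc \<pi>) (split_dec \<pi>)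
      = pomdp_objective P r \<gamma> \<beta> \<omega>0 \<pi>" for \<pi>
    using pomdp_objective_join_policy[of \<omega>0 "split_enc \<pi>" "split_dec \<pi>"]
    by (simp add: join_split_policy)
  have "push_objective P r \<gamma> \<beta> \<omega>0 enc dec
      \<le> push_objective P r \<gamma> \<beta> \<omega>0 (split_enc (belief_policy P \<omega>0 \<pi>s)) (split_dec (belief_policy P \<omega>0 \<pi>s))"
    if "\<forall>\<pi>b. pomdp_objective P r \<gamma> \<beta> \<omega>0 (belief_policy P \<omega>0 \<pi>b)
              \<le> pomdp_objective P r \<gamma> \<beta> \<omega>0 (belief_policy P \<omega>0 \<pi>s)" for \<pi>s enc dec
  proof -
    have "push_objective P r \<gamma> \<beta> \<omega>0 enc dec = obj (join_policy enc dec) \<omega>0"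
      by (rule pomdp_objective_join_policy[symmetric])
    also have "\<dots> \<le> obj (greedy_policy \<omega>0) \<omega>0"
      by (rule greedy_policy_optimal[OF assms(5)])
    also have "\<dots> \<le> obj (belief_policy P \<omega>0 \<pi>s) \<omega>0"
      using that by blast
    finally show ?thesis
      by (simp only: split)
  qed
  with split pomdp_objective_join_policy show ?thesis
    by blast
qed
end
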